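(* Let $U$ be a uniformly random (Haar-distributed) orthogonal $N\times N$ matrix. Then with probability tending to $1$ as $N\to\infty$ (high probability), $\|U_{S,T}\|<\sqrt{100(|S|+|T|)\ln N/N}$ for all non-empty $S,T\subseteq[N]$; that is, $U$ is good.
   Context: $U_{S,T}$ denotes the submatrix of $U$ with rows in $S$ and columns in $T$, and $\|\cdot\|$ is the operator norm $\|A\|=\sup_{x\ne0}\|Ax\|_2/\|x\|_2$. An orthogonal $N\times N$ matrix is good if every $a\times b$ submatrix $W$ ($a,b\in[N]$) satisfies $\|W\|\le\sqrt{100(a+b)\ln N/N}$. *)

theory Defs
  imports "HOL-Probability.Probability"
begin

text \<open>Real N x N matrices are represented as extensional functions on index pairs
  {..<N} x {..<N} (indices 0..N-1), carrying the product Borel sigma-algebra.\<close>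

definition matrix_space :: "nat \<Rightarrow> (nat \<times> nat \<Rightarrow> real) measure" where
  "matrix_space N = PiM ({..<N} \<times> {..<N}) (\<lambda>_. lborel)"

definition orth_set :: "nat \<Rightarrow> (nat \<times> nat \<Rightarrow> real) set" where
  "orth_set N = {U \<in> ({..<N} \<times> {..<N}) \<rightarrow>\<^sub>E UNIV.
      \<forall>i<N. \<forall>j<N. (\<Sum>k<N. U (k, i) * U (k, j)) = (if i = j then 1 else 0)}"

definition mat_mult :: "nat \<Rightarrow> (nat \<times> nat \<Rightarrow> real) \<Rightarrow> (nat \<times> nat \<Rightarrow> real) \<Rightarrow> (nat \<times> nat \<Rightarrow> real)" where
  "mat_mult N V U = restrict (\<lambda>(i, j). \<Sum>k<N. V (i, k) * U (k, j)) ({..<N} \<times> {..<N})"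

text \<open>Haar probability measure on the orthogonal group O(N): a probability measure on
  N x N matrices concentrated on O(N) and invariant under left multiplication by O(N)
  (this characterizes it uniquely).\<close>

definition haar_orthogonal :: "nat \<Rightarrow> (nat \<times> nat \<Rightarrow> real) measure \<Rightarrow> bool" where
  "haar_orthogonal N M \<longleftrightarrow>
     sets M = sets (matrix_space N) \<and> prob_space M \<and> emeasure M (orth_set N) = 1 \<and>
     (\<forall>V \<in> orth_set N. distr M M (mat_mult N V) = M)"

definition sub_opnorm :: "(nat \<times> nat \<Rightarrow> real) \<Rightarrow> nat set \<Rightarrow> nat set \<Rightarrow> real" where
  "sub_opnorm U S T = Sup {sqrt (\<Sum>i\<in>S. (\<Sum>j\<in>T. U (i, j) * x j)^2) / sqrt (\<Sum>j\<in>T. (x j)^2)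
      | x :: nat \<Rightarrow> real. \<exists>j\<in>T. x j \<noteq> 0}"

end

theory Submission
  imports Defs
begin

(*
  Fix unit vectors x and y. Left invariance of the Haar measure, together with a Householder
  reflection mapping any unit row vector to any other, shows that the law of y' U x does not
  depend on y. Averaging over the 2^N normalised sign vectors y = e / sqrt N therefore turns
  P(y' U x >= s) into the expected number of sign vectors e with e . U x >= s sqrt N; as U x is
  a unit vector, a Chernoff bound for Rademacher sums bounds this number by 2^N exp (- N s^2 / 2).

  A 1/4-net argument bounds the norm of the submatrix U[S,T] by 16/9 times the largest value of
  q' U p over grid vectors p, q of mesh 1/N, of which there are at most (2N+1)^k, k = #S + #T.
  With the threshold set to half the claimed bound, each grid pair fails with probability at
  most N^(-5k), and the union bound over all S, T leaves a failure probability of at most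
  ((1 + (2N+1)/N^5)^N - 1)^2, which tends to 0.
*)

lemma cosh_le_exp_square_half: "cosh x \<le> exp (x\<^sup>2 / 2)" for x :: real
proof -
  have nonneg: "cosh x \<le> exp (x\<^sup>2 / 2)" if "x \<ge> 0" for x :: real
  proof -
    have "-(2 * x) * (1/2) + ln (1 + 1/2 * (exp (2 * x) - 1)) \<le> (2 * x)\<^sup>2 / 8"
      using Hoeffdings_lemma_aux[of "2 * x" "1/2"] that by simp
    moreover have "1 + 1/2 * (exp (2 * x) - 1) = exp x * cosh x"
      by (simp add: cosh_field_def field_simps exp_minus flip: exp_add mult_2)
    ultimately have "ln (exp x * cosh x) \<le> x + x\<^sup>2 / 2"
      by (simp add: power2_eq_square)
    hence "exp x * cosh x \<le> exp (x + x\<^sup>2 / 2)"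
      by (metis exp_le_cancel_iff exp_ln cosh_real_pos exp_gt_zero mult_pos_pos)
    thus ?thesis by (simp add: exp_add)
  qed
  show ?thesis
    using nonneg[of x] nonneg[of "-x"] by (cases "x \<ge> 0") simp_all
qed

lemma card_signs_tail_le:
  fixes w :: "'a \<Rightarrow> real"
  assumes I: "finite I" and w: "(\<Sum>k\<in>I. (w k)\<^sup>2) \<le> 1" and t: "t \<ge> 0"
  shows "real (card {e \<in> I \<rightarrow>\<^sub>E {-1, 1}. t \<le> (\<Sum>k\<in>I. e k * w k)}) \<le> 2 ^ card I * exp (- t\<^sup>2 / 2)"
proof -
  define E where "E = I \<rightarrow>\<^sub>E {-1, 1 :: real}"
  define A where "A = {e \<in> E. t \<le> (\<Sum>k\<in>I. e k * w k)}"
  have "real (card A) * exp (t\<^sup>2) = (\<Sum>e\<in>A. exp (t * t))"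
    by (simp add: power2_eq_square)
  also have "\<dots> \<le> (\<Sum>e\<in>A. exp (t * (\<Sum>k\<in>I. e k * w k)))"
    using t by (intro sum_mono) (auto simp: A_def intro: mult_left_mono)
  also have "\<dots> \<le> (\<Sum>e\<in>E. exp (t * (\<Sum>k\<in>I. e k * w k)))"
    using I by (intro sum_mono2) (auto simp: A_def E_def finite_PiE)
  also have "\<dots> = (\<Sum>e\<in>E. \<Prod>k\<in>I. exp (t * w k * e k))"
    using I by (simp add: exp_sum sum_distrib_left mult_ac)
  also have "\<dots> = (\<Prod>k\<in>I. \<Sum>s\<in>{-1, 1}. exp (t * w k * s))"
    unfolding E_def using I by (intro prod_sum_PiE[symmetric]) auto
  also have "\<dots> = (\<Prod>k\<in>I. 2 * cosh (t * w k))"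
    by (intro prod.cong) (simp_all add: cosh_field_def)
  also have "\<dots> \<le> (\<Prod>k\<in>I. 2 * exp ((t * w k)\<^sup>2 / 2))"
    by (intro prod_mono conjI mult_left_mono cosh_le_exp_square_half) (auto intro: less_imp_le)
  also have "\<dots> = 2 ^ card I * exp (t\<^sup>2 / 2 * (\<Sum>k\<in>I. (w k)\<^sup>2))"
    using I by (simp add: prod.distrib sum_distrib_left sum_divide_distrib power_mult_distrib mult_ac
        flip: exp_sum)
  also have "\<dots> \<le> 2 ^ card I * exp (t\<^sup>2 / 2)"
    using w by (simp add: mult_left_le)
  finally have "real (card A) * exp (t\<^sup>2) \<le> 2 ^ card I * exp (t\<^sup>2 / 2)" .
  moreover have "exp (t\<^sup>2 / 2) = exp (t\<^sup>2) * exp (- t\<^sup>2 / 2)"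
    by (simp flip: exp_add)
  ultimately show ?thesis
    unfolding A_def E_def by (simp add: mult.commute[of _ "exp (t\<^sup>2)"] mult.assoc)
qed

lemma sum_if_mem_subset:
  "S \<subseteq> A \<Longrightarrow> finite A \<Longrightarrow> (\<Sum>i\<in>A. if i \<in> S then f i else 0) = sum f S"
  by (simp add: sum.inter_restrict[symmetric] Int_absorb1)

lemma power2_L2_set: "(L2_set f A)\<^sup>2 = (\<Sum>i\<in>A. (f i)\<^sup>2)"
  by (simp add: L2_set_def sum_nonneg)

lemma abs_sum_mult_le_L2_set: "\<bar>\<Sum>i\<in>A. f i * g i\<bar> \<le> L2_set f A * L2_set g A"
  using sum_abs[of "\<lambda>i. f i * g i" A] L2_set_mult_ineq[where f = f and g = g and A = A]
  by (simp add: abs_mult)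

lemma L2_set_pos_iff: "finite A \<Longrightarrow> L2_set f A > 0 \<longleftrightarrow> (\<exists>i\<in>A. f i \<noteq> 0)"
  using L2_set_eq_0_iff[of A f] L2_set_nonneg[of f A] by (auto simp: less_le)

definition mat_vec :: "(nat \<times> nat \<Rightarrow> real) \<Rightarrow> nat set \<Rightarrow> (nat \<Rightarrow> real) \<Rightarrow> nat \<Rightarrow> real" where
  "mat_vec U T x i = (\<Sum>j\<in>T. U (i, j) * x j)"

definition householder :: "nat \<Rightarrow> (nat \<Rightarrow> real) \<Rightarrow> nat \<times> nat \<Rightarrow> real" where
  "householder N w = (\<lambda>(i, k) \<in> {..<N} \<times> {..<N}. (if i = k then 1 else 0) - 2 * w i * w k)"

lemma householder_apply:
  "i < N \<Longrightarrow> k < N \<Longrightarrow> householder N w (i, k) = (if i = k then 1 else 0) - 2 * w i * w k"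
  by (simp add: householder_def)

lemma householder_in_orth_set:
  assumes w: "(\<Sum>k<N. (w k)\<^sup>2) = 1 \<or> (\<forall>k<N. w k = 0)"
  shows "householder N w \<in> orth_set N"
proof -
  have "(\<Sum>k<N. householder N w (k, i) * householder N w (k, j)) = (if i = j then 1 else 0)"
    if "i < N" "j < N" for i j
  proof -
    have "(\<Sum>k<N. householder N w (k, i) * householder N w (k, j))
        = (\<Sum>k<N. (if k = i then 1 else 0) * (if k = j then 1 else 0)
            - 2 * w j * (if k = i then w k else 0) - 2 * w i * (if k = j then w k else 0)
            + 4 * w i * w j * (w k)\<^sup>2)"
      using that by (intro sum.cong) (auto simp: householder_apply algebra_simps power2_eq_square)
    also have "\<dots> = (if i = j then 1 else 0) + 4 * w i * w j * ((\<Sum>k<N. (w k)\<^sup>2) - 1)"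
      using that by (simp add: sum.distrib sum_subtractf sum_distrib_left[symmetric] algebra_simps
          if_distrib[of "\<lambda>x. x * _"] cong: if_cong)
    finally show ?thesis using w that by auto
  qed
  thus ?thesis by (auto simp: orth_set_def householder_def)
qed

lemma row_mult_householder:
  assumes "k < N"
  shows "(\<Sum>i<N. y i * householder N w (i, k)) = y k - 2 * w k * (\<Sum>i<N. y i * w i)"
proof -
  have "(\<Sum>i<N. y i * householder N w (i, k))
      = (\<Sum>i<N. (if i = k then y i else 0) - 2 * w k * (y i * w i))"
    using assms by (intro sum.cong) (simp_all add: householder_apply right_diff_distrib)
  thus ?thesis
    using assms by (simp add: sum_subtractf sum_distrib_left mult_ac)
qed

lemma exists_orth_set_maps_unit_vector:
  assumes y: "(\<Sum>k<N. (y k)\<^sup>2) = 1" and z: "(\<Sum>k<N. (z k)\<^sup>2) = 1"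
  shows "\<exists>V\<in>orth_set N. \<forall>k<N. (\<Sum>i<N. y i * V (i, k)) = z k"
proof -
  define c where "c = (\<Sum>k<N. (y k - z k)\<^sup>2)"
  show ?thesis
  proof (cases "c = 0")
    case True
    hence "\<forall>k<N. y k = z k"
      by (simp add: c_def sum_nonneg_eq_0_iff)
    hence "\<forall>k<N. (\<Sum>i<N. y i * householder N (\<lambda>_. 0) (i, k)) = z k"
      by (simp add: row_mult_householder)
    thus ?thesis
      using householder_in_orth_set[where w = "\<lambda>_. 0"] by blast
  next
    case False
    have c_eq: "c = 2 - 2 * (\<Sum>i<N. y i * z i)"
      using y z by (simp add: c_def power2_diff sum.distrib sum_subtractf sum_distrib_left mult_ac)
    have c_pos: "c > 0"
      using False by (simp add: c_def order_neq_le_trans sum_nonneg)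
    define w where "w k = (y k - z k) / sqrt c" for k
    have "(\<Sum>k<N. (w k)\<^sup>2) = 1"
      using c_pos by (simp add: w_def power_divide sum_divide_distrib[symmetric] c_def[symmetric])
    moreover have "2 * w k * (\<Sum>i<N. y i * w i) = y k - z k" for k
    proof -
      have "(\<Sum>i<N. y i * (y i - z i)) = c / 2"
        using y c_eq by (simp add: right_diff_distrib sum_subtractf power2_eq_square)
      hence "(\<Sum>i<N. y i * w i) = sqrt c / 2"
        using c_pos by (simp add: w_def sum_divide_distrib[symmetric] real_div_sqrt)
      hence "2 * w k * (\<Sum>i<N. y i * w i) = 2 * ((y k - z k) / sqrt c) * (sqrt c / 2)"
        by (simp only: w_def[of k])
      thus ?thesis
        using c_pos by simp
    qed
    ultimately have "householder N w \<in> orth_set N"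
      and "\<forall>k<N. (\<Sum>i<N. y i * householder N w (i, k)) = z k"
      by (simp_all add: householder_in_orth_set row_mult_householder)
    thus ?thesis by blast
  qed
qed

lemma sum_square_mat_vec_orth:
  assumes U: "U \<in> orth_set N" and T: "T \<subseteq> {..<N}"
  shows "(\<Sum>i<N. (mat_vec U T x i)\<^sup>2) = (\<Sum>j\<in>T. (x j)\<^sup>2)"
proof -
  have fin: "finite T"
    using T finite_subset by blast
  have orth: "(\<Sum>i<N. U (i, j) * U (i, l)) = (if j = l then 1 else 0)" if "j \<in> T" "l \<in> T" for j l
  proof -
    have "j < N" "l < N"
      using T that by auto
    thus ?thesis
      using U by (simp add: orth_set_def)
  qed
  have "(\<Sum>i<N. (mat_vec U T x i)\<^sup>2) = (\<Sum>i<N. \<Sum>j\<in>T. \<Sum>l\<in>T. U (i, j) * U (i, l) * x j * x l)"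
    by (simp add: mat_vec_def power2_eq_square sum_product mult_ac)
  also have "\<dots> = (\<Sum>j\<in>T. \<Sum>l\<in>T. x j * x l * (\<Sum>i<N. U (i, j) * U (i, l)))"
    by (simp add: sum.swap[of _ "{..<N}"] sum_distrib_left mult_ac)
  also have "\<dots> = (\<Sum>j\<in>T. \<Sum>l\<in>T. if j = l then x j * x l else 0)"
    by (intro sum.cong refl) (simp add: orth)
  finally show ?thesis
    using fin by (simp add: power2_eq_square)
qed

lemma mat_vec_mat_mult:
  assumes T: "T \<subseteq> {..<N}" and i: "i < N"
  shows "mat_vec (mat_mult N V U) T x i = (\<Sum>k<N. V (i, k) * mat_vec U T x k)"
proof -
  have "mat_vec (mat_mult N V U) T x i = (\<Sum>j\<in>T. \<Sum>k<N. V (i, k) * (U (k, j) * x j))"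
    unfolding mat_vec_def using T i
    by (intro sum.cong refl) (auto simp: mat_mult_def sum_distrib_right mult.assoc)
  also have "\<dots> = (\<Sum>k<N. V (i, k) * mat_vec U T x k)"
    unfolding mat_vec_def sum_distrib_left by (rule sum.swap)
  finally show ?thesis .
qed

lemma bilinear_mat_mult:
  assumes T: "T \<subseteq> {..<N}"
  shows "(\<Sum>i<N. y i * mat_vec (mat_mult N V U) T x i)
       = (\<Sum>k<N. (\<Sum>i<N. y i * V (i, k)) * mat_vec U T x k)"
proof -
  have "(\<Sum>i<N. y i * mat_vec (mat_mult N V U) T x i)
      = (\<Sum>i<N. \<Sum>k<N. y i * V (i, k) * mat_vec U T x k)"
    using T by (simp add: mat_vec_mat_mult sum_distrib_left mult.assoc)
  also have "\<dots> = (\<Sum>k<N. (\<Sum>i<N. y i * V (i, k)) * mat_vec U T x k)"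
    unfolding sum_distrib_right by (rule sum.swap)
  finally show ?thesis .
qed

lemma (in prob_space) sum_prob_le_of_AE_card_le:
  assumes E: "finite E" and A: "\<And>e. e \<in> E \<Longrightarrow> A e \<in> events"
    and K: "AE x in M. real (card {e \<in> E. x \<in> A e}) \<le> K"
  shows "(\<Sum>e\<in>E. prob (A e)) \<le> K"
proof -
  have int: "integrable M (indicator (A e) :: _ \<Rightarrow> real)" if "e \<in> E" for e
    using A[OF that] by (simp add: less_top[symmetric] integrable_real_indicator)
  have card: "(\<Sum>e\<in>E. indicator (A e) x) = real (card {e \<in> E. x \<in> A e})" for x
    using E by (simp add: indicator_def sum.If_cases Int_def)
  have "(\<Sum>e\<in>E. prob (A e)) = expectation (\<lambda>x. \<Sum>e\<in>E. indicator (A e) x)"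
    using A int by (subst Bochner_Integration.integral_sum) (auto simp: Int_absorb2)
  also have "\<dots> \<le> expectation (\<lambda>_. K)"
  proof (rule integral_mono_AE)
    show "integrable M (\<lambda>x. \<Sum>e\<in>E. indicator (A e) x :: real)"
      using int by (rule Bochner_Integration.integrable_sum)
    show "AE x in M. (\<Sum>e\<in>E. indicator (A e) x) \<le> K"
      using K by (simp add: card)
  qed simp
  finally show ?thesis
    by (simp add: prob_space)
qed

lemma space_matrix_space: "space (matrix_space N) = {..<N} \<times> {..<N} \<rightarrow>\<^sub>E UNIV"
  by (simp add: matrix_space_def space_PiM)

lemma measurable_matrix_entry [measurable]: "(\<lambda>U. U ij) \<in> borel_measurable (matrix_space N)"
proof (cases "ij \<in> {..<N} \<times> {..<N}")
  case True
  thus ?thesis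
    unfolding matrix_space_def by (simp add: measurable_component_singleton)
next
  case False
  hence "U ij = undefined" if "U \<in> space (matrix_space N)" for U
    using that False by (cases ij) (auto simp: space_matrix_space PiE_def extensional_def)
  thus ?thesis
    by (subst measurable_cong[where g = "\<lambda>_. undefined"]) auto
qed

lemma measurable_mat_mult: "mat_mult N V \<in> measurable (matrix_space N) (matrix_space N)"
  unfolding mat_mult_def matrix_space_def
  by (rule measurable_restrict) (auto simp: matrix_space_def[symmetric] split: prod.split)

locale haar_orthogonal_measure =
  fixes N :: nat and M :: "(nat \<times> nat \<Rightarrow> real) measure"
  assumes haar: "haar_orthogonal N M"
begin

lemma sets_eq [measurable_cong]: "sets M = sets (matrix_space N)"
  using haar by (simp add: haar_orthogonal_def)

lemma space_eq: "space M = space (matrix_space N)"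
  using sets_eq by (rule sets_eq_imp_space_eq)

sublocale prob_space M
  using haar by (simp add: haar_orthogonal_def)

lemma AE_orth_set: "AE U in M. U \<in> orth_set N"
  using haar by (intro AE_prob_1) (simp add: haar_orthogonal_def measure_def)

lemma events_bilinear_ge: "{U \<in> space M. c \<le> (\<Sum>i\<in>S. y i * mat_vec U T x i)} \<in> events"
  unfolding mat_vec_def by measurable

lemma prob_bilinear_ge_row_invariant:
  assumes T: "T \<subseteq> {..<N}" and y: "(\<Sum>k<N. (y k)\<^sup>2) = 1" and z: "(\<Sum>k<N. (z k)\<^sup>2) = 1"
  shows "prob {U \<in> space M. s \<le> (\<Sum>i<N. y i * mat_vec U T x i)}
       = prob {U \<in> space M. s \<le> (\<Sum>i<N. z i * mat_vec U T x i)}"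
proof -
  obtain V where V: "V \<in> orth_set N" and yV: "\<And>k. k < N \<Longrightarrow> (\<Sum>i<N. y i * V (i, k)) = z k"
    using exists_orth_set_maps_unit_vector[OF y z] by blast
  have f: "mat_mult N V \<in> measurable M M"
    using measurable_mat_mult by (simp cong: measurable_cong_sets add: sets_eq)
  have "prob {U \<in> space M. s \<le> (\<Sum>i<N. y i * mat_vec U T x i)}
      = prob (mat_mult N V -` {U \<in> space M. s \<le> (\<Sum>i<N. y i * mat_vec U T x i)} \<inter> space M)"
    using haar V measure_distr[OF f events_bilinear_ge] by (simp add: haar_orthogonal_def)
  also have "mat_mult N V -` {U \<in> space M. s \<le> (\<Sum>i<N. y i * mat_vec U T x i)} \<inter> space M
      = {U \<in> space M. s \<le> (\<Sum>i<N. z i * mat_vec U T x i)}"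
    using measurable_space[OF f] T by (auto simp: bilinear_mat_mult yV)
  finally show ?thesis .
qed

lemma prob_bilinear_ge_unit_le:
  assumes T: "T \<subseteq> {..<N}" and x: "(\<Sum>j\<in>T. (x j)\<^sup>2) = 1" and y: "(\<Sum>i<N. (y i)\<^sup>2) = 1"
    and s: "s \<ge> 0"
  shows "prob {U \<in> space M. s \<le> (\<Sum>i<N. y i * mat_vec U T x i)} \<le> exp (- (real N * s\<^sup>2) / 2)"
proof -
  define E where "E = {..<N} \<rightarrow>\<^sub>E {-1, 1 :: real}"
  define z where "z e i = e i / sqrt (real N)" for e :: "nat \<Rightarrow> real" and i
  define A where "A v = {U \<in> space M. s \<le> (\<Sum>i<N. v i * mat_vec U T x i)}" for v
  have N: "N > 0"
    using y by (intro gr0I) simp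
  have z_unit: "(\<Sum>i<N. (z e i)\<^sup>2) = 1" if "e \<in> E" for e
  proof -
    have "(z e i)\<^sup>2 = 1 / real N" if "i < N" for i
    proof -
      have "e i \<in> {-1, 1}"
        using \<open>e \<in> E\<close> that by (auto simp: E_def PiE_iff)
      hence "(e i)\<^sup>2 = 1"
        by auto
      thus ?thesis
        by (simp add: z_def power_divide)
    qed
    thus ?thesis
      using N by simp
  qed
  have card_E: "card E = 2 ^ N"
    by (simp add: E_def card_PiE numeral_2_eq_2)
  have "2 ^ N * prob (A y) = (\<Sum>e\<in>E. prob (A y))"
    by (simp add: card_E)
  also have "\<dots> = (\<Sum>e\<in>E. prob (A (z e)))"
    unfolding A_def by (intro sum.cong refl prob_bilinear_ge_row_invariant T y z_unit)
  also have "\<dots> \<le> 2 ^ N * exp (- (real N * s\<^sup>2) / 2)"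
  proof (rule sum_prob_le_of_AE_card_le)
    show "finite E"
      by (simp add: E_def finite_PiE)
    show "AE U in M. real (card {e \<in> E. U \<in> A (z e)}) \<le> 2 ^ N * exp (- (real N * s\<^sup>2) / 2)"
    proof (rule eventually_mono[OF AE_orth_set])
      fix U assume U: "U \<in> orth_set N"
      have "{e \<in> E. U \<in> A (z e)} \<subseteq> {e \<in> E. s * sqrt (real N) \<le> (\<Sum>i<N. e i * mat_vec U T x i)}"
        using N by (auto simp: A_def z_def sum_divide_distrib[symmetric] le_divide_eq)
      hence "card {e \<in> E. U \<in> A (z e)}
          \<le> card {e \<in> E. s * sqrt (real N) \<le> (\<Sum>i<N. e i * mat_vec U T x i)}"
        by (intro card_mono) (simp_all add: E_def finite_PiE)
      also have "real \<dots> \<le> 2 ^ N * exp (- (s * sqrt (real N))\<^sup>2 / 2)"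
        using card_signs_tail_le[of "{..<N}" "mat_vec U T x" "s * sqrt (real N)"]
          sum_square_mat_vec_orth[OF U T] x s by (simp add: E_def)
      finally show "real (card {e \<in> E. U \<in> A (z e)}) \<le> 2 ^ N * exp (- (real N * s\<^sup>2) / 2)"
        by (simp add: power_mult_distrib mult.commute)
    qed
  qed (simp add: A_def events_bilinear_ge)
  finally show ?thesis
    by (simp add: A_def)
qed

lemma prob_bilinear_ge_le:
  assumes S: "S \<subseteq> {..<N}" and T: "T \<subseteq> {..<N}" and \<theta>: "\<theta> > 0"
    and p: "L2_set p T \<le> a" and q: "L2_set q S \<le> b"
  shows "prob {U \<in> space M. \<theta> \<le> (\<Sum>i\<in>S. q i * mat_vec U T p i)}
       \<le> exp (- (real N * \<theta>\<^sup>2) / (2 * a\<^sup>2 * b\<^sup>2))"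
proof (cases "L2_set p T = 0 \<or> L2_set q S = 0")
  case True
  have "finite S" "finite T"
    using S T finite_subset by auto
  hence "(\<Sum>i\<in>S. q i * mat_vec U T p i) = 0" for U
    using True by (auto simp: L2_set_eq_0_iff mat_vec_def)
  thus ?thesis
    using \<theta> by simp
next
  case False
  define \<alpha> where "\<alpha> = L2_set p T"
  define \<beta> where "\<beta> = L2_set q S"
  have \<alpha>: "\<alpha> > 0" and \<beta>: "\<beta> > 0"
    using False L2_set_nonneg by (auto simp: \<alpha>_def \<beta>_def order_neq_le_trans)
  define x where "x j = p j / \<alpha>" for j
  define y where "y i = (if i \<in> S then q i / \<beta> else 0)" for i
  have "(\<Sum>j\<in>T. (p j)\<^sup>2) = \<alpha>\<^sup>2"
    by (simp add: \<alpha>_def power2_L2_set)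
  hence x_unit: "(\<Sum>j\<in>T. (x j)\<^sup>2) = 1"
    using \<alpha> by (simp add: x_def power_divide sum_divide_distrib[symmetric])
  have "(\<Sum>i\<in>S. (q i)\<^sup>2) = \<beta>\<^sup>2"
    by (simp add: \<beta>_def power2_L2_set)
  hence y_unit: "(\<Sum>i<N. (y i)\<^sup>2) = 1"
    using \<beta> S
    by (simp add: y_def if_distrib[of power2] sum_if_mem_subset power_divide
        sum_divide_distrib[symmetric] cong: if_cong)
  have form: "(\<Sum>i<N. y i * mat_vec U T x i) = (\<Sum>i\<in>S. q i * mat_vec U T p i) / (\<alpha> * \<beta>)" for U
  proof -
    have "(\<Sum>i<N. y i * mat_vec U T x i)
        = (\<Sum>i<N. if i \<in> S then q i * mat_vec U T p i / (\<alpha> * \<beta>) else 0)"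
      by (intro sum.cong) (simp_all add: y_def x_def mat_vec_def sum_divide_distrib[symmetric])
    thus ?thesis
      using S by (simp add: sum_if_mem_subset sum_divide_distrib)
  qed
  have "prob {U \<in> space M. \<theta> \<le> (\<Sum>i\<in>S. q i * mat_vec U T p i)}
      = prob {U \<in> space M. \<theta> / (\<alpha> * \<beta>) \<le> (\<Sum>i<N. y i * mat_vec U T x i)}"
    using mult_pos_pos[OF \<alpha> \<beta>] by (simp add: form divide_le_cancel)
  also have "\<dots> \<le> exp (- (real N * (\<theta> / (\<alpha> * \<beta>))\<^sup>2) / 2)"
    using \<alpha> \<beta> \<theta> by (intro prob_bilinear_ge_unit_le T x_unit y_unit) simp
  also have "\<dots> \<le> exp (- (real N * \<theta>\<^sup>2) / (2 * a\<^sup>2 * b\<^sup>2))"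
  proof -
    have "(\<alpha> * \<beta>)\<^sup>2 \<le> (a * b)\<^sup>2"
      using \<alpha> \<beta> p q by (intro power_mono mult_mono) (auto simp: \<alpha>_def \<beta>_def)
    moreover have "a > 0" "b > 0"
      using \<alpha> \<beta> p q by (auto simp: \<alpha>_def \<beta>_def)
    ultimately have "real N * \<theta>\<^sup>2 / (2 * a\<^sup>2 * b\<^sup>2) \<le> real N * \<theta>\<^sup>2 / (2 * (\<alpha> * \<beta>)\<^sup>2)"
      using \<alpha> \<beta> by (intro divide_left_mono) (auto simp: power_mult_distrib)
    thus ?thesis
      by (simp add: power_divide)
  qed
  finally show ?thesis .
qed

end

lemma mat_vec_add: "mat_vec U T (\<lambda>j. x j + y j) i = mat_vec U T x i + mat_vec U T y i"
  by (simp add: mat_vec_def distrib_left sum.distrib)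

lemma mat_vec_scale: "mat_vec U T (\<lambda>j. c * x j) i = c * mat_vec U T x i"
  by (simp add: mat_vec_def sum_distrib_left mult_ac)

lemma L2_set_mat_vec_le_Frobenius:
  "L2_set (mat_vec U T x) S \<le> L2_set (\<lambda>i. L2_set (\<lambda>j. U (i, j)) T) S * L2_set x T"
proof -
  have "L2_set (mat_vec U T x) S = L2_set (\<lambda>i. \<bar>mat_vec U T x i\<bar>) S"
    by (simp add: L2_set_def)
  also have "\<dots> \<le> L2_set (\<lambda>i. L2_set (\<lambda>j. U (i, j)) T * L2_set x T) S"
    unfolding mat_vec_def by (rule L2_set_mono) (simp_all add: abs_sum_mult_le_L2_set)
  finally show ?thesis
    by (simp add: L2_set_left_distrib)
qed

lemma sub_opnorm_altdef:
  "sub_opnorm U S T = Sup {L2_set (mat_vec U T x) S / L2_set x T | x. \<exists>j\<in>T. x j \<noteq> 0}"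
  by (simp add: sub_opnorm_def L2_set_def mat_vec_def)

lemma L2_set_mat_vec_le_sub_opnorm:
  assumes T: "finite T"
  shows "L2_set (mat_vec U T x) S \<le> sub_opnorm U S T * L2_set x T"
proof (cases "L2_set x T > 0")
  case True
  let ?R = "{L2_set (mat_vec U T x) S / L2_set x T | x. \<exists>j\<in>T. x j \<noteq> 0}"
  have bdd: "bdd_above ?R"
    by (rule bdd_aboveI[where M = "L2_set (\<lambda>i. L2_set (\<lambda>j. U (i, j)) T) S"])
      (auto simp: L2_set_pos_iff[OF T, symmetric] divide_le_eq L2_set_mat_vec_le_Frobenius)
  have "L2_set (mat_vec U T x) S / L2_set x T \<in> ?R"
    using True T by (auto simp: L2_set_pos_iff)
  hence "L2_set (mat_vec U T x) S / L2_set x T \<le> sub_opnorm U S T"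
    unfolding sub_opnorm_altdef using bdd by (rule cSup_upper)
  thus ?thesis
    using True by (simp add: divide_le_eq)
next
  case False
  hence "\<forall>j\<in>T. x j = 0"
    using T by (simp add: L2_set_pos_iff)
  thus ?thesis
    by (simp add: mat_vec_def L2_set_0')
qed

lemma sub_opnorm_nonneg:
  assumes "finite T" "T \<noteq> {}"
  shows "sub_opnorm U S T \<ge> 0"
proof -
  have "0 < L2_set (\<lambda>_. 1) T"
    using assms by (simp add: L2_set_pos_iff ex_in_conv)
  moreover have "0 \<le> sub_opnorm U S T * L2_set (\<lambda>_. 1) T"
    using L2_set_mat_vec_le_sub_opnorm[OF assms(1)] L2_set_nonneg order_trans by blast
  ultimately show ?thesis
    by (simp add: zero_le_mult_iff)
qed

lemma sub_opnorm_le: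
  assumes T: "finite T" "T \<noteq> {}"
    and d: "\<And>x. L2_set x T = 1 \<Longrightarrow> L2_set (mat_vec U T x) S \<le> d"
  shows "sub_opnorm U S T \<le> d"
  unfolding sub_opnorm_altdef
proof (rule cSup_least)
  obtain j where "j \<in> T"
    using T(2) by (metis ex_in_conv)
  thus "{L2_set (mat_vec U T x) S / L2_set x T | x. \<exists>j\<in>T. x j \<noteq> 0} \<noteq> {}"
    by (auto intro!: exI[where x = "\<lambda>_. 1"])
next
  fix r assume "r \<in> {L2_set (mat_vec U T x) S / L2_set x T | x. \<exists>j\<in>T. x j \<noteq> 0}"
  then obtain x where r: "r = L2_set (mat_vec U T x) S / L2_set x T" and x: "L2_set x T > 0"
    using T by (auto simp: L2_set_pos_iff)
  define c where "c = 1 / L2_set x T"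
  have c: "c \<ge> 0"
    by (simp add: c_def)
  have "L2_set (\<lambda>j. c * x j) T = c * L2_set x T"
    by (rule L2_set_right_distrib[OF c, symmetric])
  hence "L2_set (mat_vec U T (\<lambda>j. c * x j)) S \<le> d"
    using x by (intro d) (simp add: c_def)
  moreover have "L2_set (mat_vec U T (\<lambda>j. c * x j)) S = c * L2_set (mat_vec U T x) S"
    unfolding mat_vec_scale by (rule L2_set_right_distrib[OF c, symmetric])
  ultimately show "r \<le> d"
    by (simp add: r c_def)
qed

lemma L2_set_le_of_net:
  assumes \<epsilon>: "\<epsilon> < 1" and \<theta>: "0 \<le> \<theta>"
    and Q: "\<And>y. L2_set y S \<le> 1 \<Longrightarrow> \<exists>q\<in>Q. L2_set (\<lambda>i. y i - q i) S \<le> \<epsilon>"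
    and form: "\<And>q. q \<in> Q \<Longrightarrow> (\<Sum>i\<in>S. q i * w i) < \<theta>"
  shows "L2_set w S \<le> \<theta> / (1 - \<epsilon>)"
proof -
  define r where "r = L2_set w S"
  show ?thesis
  proof (cases "r = 0")
    case True
    thus ?thesis
      using \<theta> \<epsilon> by (simp add: r_def)
  next
    case False
    hence r: "r > 0"
      using L2_set_nonneg[of w S] unfolding r_def by linarith
    define v where "v i = 1 / r * w i" for i
    have "L2_set v S = 1 / r * r"
      unfolding v_def r_def by (rule L2_set_right_distrib[symmetric]) simp
    then obtain q where q: "q \<in> Q" and vq: "L2_set (\<lambda>i. v i - q i) S \<le> \<epsilon>"
      using Q r by force
    have "(\<Sum>i\<in>S. v i * w i) = 1 / r * (\<Sum>i\<in>S. (w i)\<^sup>2)"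
      by (simp add: v_def sum_distrib_left power2_eq_square mult.assoc)
    also have "\<dots> = 1 / r * r\<^sup>2"
      by (simp add: r_def power2_L2_set)
    also have "\<dots> = r"
      using r by (simp add: power2_eq_square)
    finally have "r = (\<Sum>i\<in>S. q i * w i) + (\<Sum>i\<in>S. (v i - q i) * w i)"
      by (simp add: algebra_simps sum.distrib[symmetric])
    also have "\<dots> < \<theta> + \<epsilon> * r"
    proof (rule add_less_le_mono)
      have "(\<Sum>i\<in>S. (v i - q i) * w i) \<le> L2_set (\<lambda>i. v i - q i) S * r"
        using abs_sum_mult_le_L2_set[of "\<lambda>i. v i - q i" w S] by (simp add: r_def)
      also have "\<dots> \<le> \<epsilon> * r"
        using vq r by (intro mult_right_mono) auto
      finally show "(\<Sum>i\<in>S. (v i - q i) * w i) \<le> \<epsilon> * r" .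
    qed (rule form[OF q])
    finally show ?thesis
      using \<epsilon> by (simp add: r_def[symmetric] field_simps)
  qed
qed

lemma sub_opnorm_le_of_nets:
  assumes T: "finite T" "T \<noteq> {}" and \<epsilon>: "0 \<le> \<epsilon>" "\<epsilon> < 1" and \<theta>: "0 \<le> \<theta>"
    and P: "\<And>x. L2_set x T \<le> 1 \<Longrightarrow> \<exists>p\<in>P. L2_set (\<lambda>j. x j - p j) T \<le> \<epsilon>"
    and Q: "\<And>y. L2_set y S \<le> 1 \<Longrightarrow> \<exists>q\<in>Q. L2_set (\<lambda>i. y i - q i) S \<le> \<epsilon>"
    and form: "\<And>p q. p \<in> P \<Longrightarrow> q \<in> Q \<Longrightarrow> (\<Sum>i\<in>S. q i * mat_vec U T p i) < \<theta>"
  shows "sub_opnorm U S T \<le> \<theta> / (1 - \<epsilon>)\<^sup>2"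
proof -
  define m where "m = sub_opnorm U S T"
  have "m \<le> \<theta> / (1 - \<epsilon>) + \<epsilon> * m"
    unfolding m_def
  proof (rule sub_opnorm_le[OF T])
    fix x assume "L2_set x T = 1"
    then obtain p where p: "p \<in> P" and xp: "L2_set (\<lambda>j. x j - p j) T \<le> \<epsilon>"
      using P by force
    have "L2_set (mat_vec U T x) S
        = L2_set (\<lambda>i. mat_vec U T p i + mat_vec U T (\<lambda>j. x j - p j) i) S"
      by (simp flip: mat_vec_add)
    also have "\<dots> \<le> L2_set (mat_vec U T p) S + L2_set (mat_vec U T (\<lambda>j. x j - p j)) S"
      by (rule L2_set_triangle_ineq)
    also have "\<dots> \<le> \<theta> / (1 - \<epsilon>) + sub_opnorm U S T * \<epsilon>"
      using L2_set_le_of_net[OF \<epsilon>(2) \<theta> Q form[OF p]]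
        L2_set_mat_vec_le_sub_opnorm[OF T(1), of U "\<lambda>j. x j - p j" S]
        mult_left_mono[OF xp sub_opnorm_nonneg[OF T, where U = U and S = S]] by linarith
    finally show "L2_set (mat_vec U T x) S \<le> \<theta> / (1 - \<epsilon>) + \<epsilon> * sub_opnorm U S T"
      by (simp add: mult.commute)
  qed
  hence "m * (1 - \<epsilon>) \<le> \<theta> / (1 - \<epsilon>)"
    by (simp add: algebra_simps)
  hence "m \<le> \<theta> / (1 - \<epsilon>) / (1 - \<epsilon>)"
    using \<epsilon> by (simp add: pos_le_divide_eq)
  thus ?thesis
    by (simp add: m_def power2_eq_square)
qed

(* The norm bound 5/4 holds for every grid vector within distance 1/4 of the unit ball. *)
definition grid :: "nat \<Rightarrow> nat set \<Rightarrow> (nat \<Rightarrow> real) set" where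
  "grid N T = {p \<in> T \<rightarrow>\<^sub>E (\<lambda>k. real_of_int k / real N) ` {- int N..int N}. L2_set p T \<le> 5/4}"

lemma finite_grid:
  assumes "finite T"
  shows "finite (grid N T)"
proof (rule finite_subset)
  show "grid N T \<subseteq> T \<rightarrow>\<^sub>E (\<lambda>k. real_of_int k / real N) ` {- int N..int N}"
    by (auto simp: grid_def)
qed (simp add: assms finite_PiE)

lemma card_grid_le:
  assumes "finite T"
  shows "card (grid N T) \<le> (2 * N + 1) ^ card T"
proof -
  have "card (grid N T) \<le> card (T \<rightarrow>\<^sub>E (\<lambda>k. real_of_int k / real N) ` {- int N..int N})"
    unfolding grid_def using assms by (intro card_mono) (auto intro: finite_PiE)
  also have "\<dots> = card ((\<lambda>k. real_of_int k / real N) ` {- int N..int N}) ^ card T"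
    using assms by (simp add: card_PiE)
  also have "\<dots> \<le> card {- int N..int N} ^ card T"
    by (intro power_mono card_image_le) simp_all
  also have "card {- int N..int N} = 2 * N + 1"
    by simp
  finally show ?thesis .
qed

lemma floor_scaled_mem:
  assumes "\<bar>a\<bar> \<le> 1"
  shows "\<lfloor>a * real N\<rfloor> \<in> {- int N..int N}"
proof -
  have "- real N \<le> a * real N" "a * real N \<le> real N"
    using assms mult_right_mono[of "-1" a "real N"] mult_right_mono[of a 1 "real N"]
    by (auto simp: abs_le_iff)
  thus ?thesis
    by (simp add: le_floor_iff floor_le_iff)
qed

lemma abs_sub_floor_scaled_le:
  assumes "N > 0"
  shows "\<bar>a - real_of_int \<lfloor>a * real N\<rfloor> / real N\<bar> \<le> 1 / real N"
proof -
  have "a - real_of_int \<lfloor>a * real N\<rfloor> / real N = (a * real N - real_of_int \<lfloor>a * real N\<rfloor>) / real N"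
    using assms by (simp add: field_simps)
  moreover have "0 \<le> a * real N - real_of_int \<lfloor>a * real N\<rfloor>"
    and "a * real N - real_of_int \<lfloor>a * real N\<rfloor> \<le> 1"
    by linarith+
  ultimately show ?thesis
    using assms by (simp add: divide_right_mono)
qed

lemma grid_approx:
  assumes N: "16 \<le> N" and T: "finite T" "card T \<le> N" and v: "L2_set v T \<le> 1"
  shows "\<exists>p\<in>grid N T. L2_set (\<lambda>j. v j - p j) T \<le> 1/4"
proof -
  define p where "p = (\<lambda>j \<in> T. real_of_int \<lfloor>v j * real N\<rfloor> / real N)"
  have v_bound: "\<bar>v j\<bar> \<le> 1" if "j \<in> T" for j
  proof -
    have "\<bar>v j\<bar> \<le> L2_set (\<lambda>j. \<bar>v j\<bar>) T"
      by (rule member_le_L2_set[OF T(1) that])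
    also have "\<dots> \<le> 1"
      using v by (simp add: L2_set_def)
    finally show ?thesis .
  qed
  have p_grid: "p \<in> T \<rightarrow>\<^sub>E (\<lambda>k. real_of_int k / real N) ` {- int N..int N}"
  proof (rule PiE_I)
    fix j assume "j \<in> T"
    thus "p j \<in> (\<lambda>k. real_of_int k / real N) ` {- int N..int N}"
      by (simp add: p_def) (intro imageI floor_scaled_mem v_bound)
  qed (simp add: p_def)
  have "(v j - p j)\<^sup>2 \<le> (1 / real N)\<^sup>2" if "j \<in> T" for j
  proof -
    have "\<bar>v j - p j\<bar> \<le> 1 / real N"
      using abs_sub_floor_scaled_le[of N "v j"] N that by (simp add: p_def)
    hence "\<bar>v j - p j\<bar>\<^sup>2 \<le> (1 / real N)\<^sup>2"
      by (rule power_mono) simp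
    thus ?thesis
      by simp
  qed
  hence "(\<Sum>j\<in>T. (v j - p j)\<^sup>2) \<le> real (card T) * (1 / real N)\<^sup>2"
    using sum_bounded_above[of T "\<lambda>j. (v j - p j)\<^sup>2"] by simp
  also have "\<dots> \<le> real N * (1 / real N)\<^sup>2"
    using T(2) by (intro mult_right_mono) simp_all
  also have "\<dots> \<le> (1 / 4)\<^sup>2"
    using N by (simp add: power2_eq_square divide_le_eq)
  finally have "L2_set (\<lambda>j. v j - p j) T \<le> sqrt ((1 / 4)\<^sup>2)"
    unfolding L2_set_def by (rule real_sqrt_le_mono)
  hence close: "L2_set (\<lambda>j. v j - p j) T \<le> 1/4"
    by simp
  have "L2_set p T \<le> L2_set v T + L2_set (\<lambda>j. p j - v j) T"
    using L2_set_triangle_ineq[of v "\<lambda>j. p j - v j" T] by simp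
  also have "L2_set (\<lambda>j. p j - v j) T = L2_set (\<lambda>j. v j - p j) T"
    by (simp add: L2_set_def power2_commute)
  finally have "p \<in> grid N T"
    using p_grid v close by (simp add: grid_def)
  thus ?thesis
    using close by blast
qed

lemma sub_opnorm_less_of_grid:
  assumes N: "16 \<le> N" and S: "S \<subseteq> {..<N}" and T: "T \<subseteq> {..<N}" "T \<noteq> {}" and \<theta>: "0 < \<theta>"
    and form: "\<And>p q. p \<in> grid N T \<Longrightarrow> q \<in> grid N S \<Longrightarrow> (\<Sum>i\<in>S. q i * mat_vec U T p i) < \<theta>"
  shows "sub_opnorm U S T < 2 * \<theta>"
proof -
  have fin: "finite S" "finite T"
    using S T finite_subset by auto
  have card: "card S \<le> N" "card T \<le> N"
    using card_mono[OF _ S] card_mono[OF _ T(1)] by auto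
  have "sub_opnorm U S T \<le> \<theta> / (1 - 1/4)\<^sup>2"
    by (rule sub_opnorm_le_of_nets[OF fin(2) T(2) _ _ _ grid_approx[OF N fin(2) card(2)]
          grid_approx[OF N fin(1) card(1)] form]) (use \<theta> in simp_all)
  also have "\<dots> < 2 * \<theta>"
    using \<theta> by (simp add: power2_eq_square)
  finally show ?thesis .
qed

lemma floor_scaled_LIMSEQ: "(\<lambda>k. real_of_int \<lfloor>a * real (Suc k)\<rfloor> / real (Suc k)) \<longlonglongrightarrow> a"
proof (rule real_tendsto_sandwich)
  have "a - 1 / real (Suc k) \<le> real_of_int \<lfloor>a * real (Suc k)\<rfloor> / real (Suc k)" for k
  proof -
    have "a - 1 / real (Suc k) = (a * real (Suc k) - 1) / real (Suc k)"
      by (simp add: field_simps)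
    also have "\<dots> \<le> real_of_int \<lfloor>a * real (Suc k)\<rfloor> / real (Suc k)"
      by (intro divide_right_mono; linarith)
    finally show ?thesis .
  qed
  thus "\<forall>\<^sub>F k in sequentially. a - 1 / real (Suc k) \<le> real_of_int \<lfloor>a * real (Suc k)\<rfloor> / real (Suc k)"
    by simp
  have "real_of_int \<lfloor>a * real (Suc k)\<rfloor> / real (Suc k) \<le> a" for k
    by (simp add: divide_le_eq)
  thus "\<forall>\<^sub>F k in sequentially. real_of_int \<lfloor>a * real (Suc k)\<rfloor> / real (Suc k) \<le> a"
    by simp
  show "(\<lambda>k. a - 1 / real (Suc k)) \<longlonglongrightarrow> a"
    using tendsto_diff[OF tendsto_const LIMSEQ_inverse_real_of_nat, of a] by (simp add: inverse_eq_divide)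
qed simp

lemma L2_set_mat_vec_le_of_Rats:
  assumes T: "finite T"
    and d: "\<And>x. x \<in> T \<rightarrow>\<^sub>E (\<rat> :: real set) \<Longrightarrow> L2_set (mat_vec U T x) S \<le> d * L2_set x T"
  shows "L2_set (mat_vec U T x) S \<le> d * L2_set x T"
proof -
  define xs where "xs k = (\<lambda>j \<in> T. real_of_int \<lfloor>x j * real (Suc k)\<rfloor> / real (Suc k))" for k
  have xs_Rats: "xs k \<in> T \<rightarrow>\<^sub>E \<rat>" for k
    by (auto simp: xs_def)
  have xs_lim: "(\<lambda>k. xs k j) \<longlonglongrightarrow> x j" if "j \<in> T" for j
    using that floor_scaled_LIMSEQ[of "x j"] by (simp add: xs_def)
  have "(\<lambda>k. d * L2_set (xs k) T - L2_set (mat_vec U T (xs k)) S)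
      \<longlonglongrightarrow> d * L2_set x T - L2_set (mat_vec U T x) S"
    unfolding L2_set_def mat_vec_def by (intro tendsto_intros xs_lim)
  hence "0 \<le> d * L2_set x T - L2_set (mat_vec U T x) S"
    by (rule LIMSEQ_le_const) (use d[OF xs_Rats] in simp)
  thus ?thesis
    by simp
qed

(* The supremum defining sub_opnorm ranges over uncountably many vectors; this characterisation
   only involves countably many rational ones. *)
lemma sub_opnorm_less_iff:
  assumes T: "finite T" "T \<noteq> {}"
  shows "sub_opnorm U S T < c \<longleftrightarrow>
    (\<exists>n. \<forall>x \<in> T \<rightarrow>\<^sub>E (\<rat> :: real set).
      L2_set (mat_vec U T x) S \<le> (c - 1 / real (Suc n)) * L2_set x T)"
proof
  assume "sub_opnorm U S T < c"
  then obtain n where n: "1 / real (Suc n) < c - sub_opnorm U S T"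
    using reals_Archimedean[of "c - sub_opnorm U S T"] by (auto simp: inverse_eq_divide)
  have "L2_set (mat_vec U T x) S \<le> (c - 1 / real (Suc n)) * L2_set x T" for x
  proof -
    have "L2_set (mat_vec U T x) S \<le> sub_opnorm U S T * L2_set x T"
      by (rule L2_set_mat_vec_le_sub_opnorm[OF T(1)])
    also have "\<dots> \<le> (c - 1 / real (Suc n)) * L2_set x T"
      using n by (intro mult_right_mono) auto
    finally show ?thesis .
  qed
  thus "\<exists>n. \<forall>x \<in> T \<rightarrow>\<^sub>E \<rat>. L2_set (mat_vec U T x) S \<le> (c - 1 / real (Suc n)) * L2_set x T"
    by blast
next
  assume "\<exists>n. \<forall>x \<in> T \<rightarrow>\<^sub>E (\<rat> :: real set).
    L2_set (mat_vec U T x) S \<le> (c - 1 / real (Suc n)) * L2_set x T"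
  then obtain n where
    n: "\<And>x. x \<in> T \<rightarrow>\<^sub>E \<rat> \<Longrightarrow> L2_set (mat_vec U T x) S \<le> (c - 1 / real (Suc n)) * L2_set x T"
    by blast
  have "sub_opnorm U S T \<le> c - 1 / real (Suc n)"
  proof (rule sub_opnorm_le[OF T])
    fix x assume "L2_set x T = 1"
    thus "L2_set (mat_vec U T x) S \<le> c - 1 / real (Suc n)"
      using L2_set_mat_vec_le_of_Rats[OF T(1) n, of x] by simp
  qed
  moreover have "0 < 1 / real (Suc n)"
    by simp
  ultimately show "sub_opnorm U S T < c"
    by linarith
qed

lemma sets_sub_opnorm_less:
  assumes T: "finite T" "T \<noteq> {}"
  shows "{U \<in> space (matrix_space N). sub_opnorm U S T < c} \<in> sets (matrix_space N)"
proof -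
  have "countable (T \<rightarrow>\<^sub>E (\<rat> :: real set))"
    using T(1) by (intro countable_PiE) (auto simp: countable_rat)
  hence "Measurable.pred (matrix_space N) (\<lambda>U. \<exists>n. \<forall>x \<in> T \<rightarrow>\<^sub>E (\<rat> :: real set).
      L2_set (mat_vec U T x) S \<le> (c - 1 / real (Suc n)) * L2_set x T)"
    unfolding L2_set_def mat_vec_def by measurable
  thus ?thesis
    by (simp add: pred_def sub_opnorm_less_iff[OF T])
qed

lemma exp_neg_mult_ln: "x > 0 \<Longrightarrow> exp (- (real n * ln x)) = (1 / x) ^ n"
  by (simp add: exp_minus exp_of_nat_mult power_one_over inverse_eq_divide)

lemma sum_power_card_Pow: "finite A \<Longrightarrow> (\<Sum>X\<in>Pow A. r ^ card X) = (1 + r) ^ card A"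
  for r :: real
  using prod_add[of A "\<lambda>_. r" "\<lambda>_. 1"] by (simp add: add.commute)

(* The threshold is half the bound of the theorem: sqrt (100 k ln N / N) = 2 sqrt (25 k ln N / N). *)
definition grid_violation ::
    "(nat \<times> nat \<Rightarrow> real) measure \<Rightarrow> nat \<Rightarrow> nat set \<Rightarrow> nat set \<Rightarrow> (nat \<times> nat \<Rightarrow> real) set" where
  "grid_violation M N S T = (\<Union>(p, q) \<in> grid N T \<times> grid N S.
     {U \<in> space M. sqrt (25 * real (card S + card T) * ln (real N) / real N)
        \<le> (\<Sum>i\<in>S. q i * mat_vec U T p i)})"

context haar_orthogonal_measure
begin

lemma grid_violation_events:
  assumes "finite S" "finite T"
  shows "grid_violation M N S T \<in> events"
  unfolding grid_violation_def
proof (rule sets.finite_UN)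
  show "finite (grid N T \<times> grid N S)"
    using assms by (simp add: finite_grid)
qed (simp only: split_paired_all prod.case events_bilinear_ge)

lemma prob_grid_form_ge_le:
  assumes N: "1 < N" and S: "S \<subseteq> {..<N}" "S \<noteq> {}" and T: "T \<subseteq> {..<N}"
    and p: "p \<in> grid N T" and q: "q \<in> grid N S"
  shows "prob {U \<in> space M. sqrt (25 * real (card S + card T) * ln (real N) / real N)
      \<le> (\<Sum>i\<in>S. q i * mat_vec U T p i)} \<le> (1 / real N ^ 5) ^ (card S + card T)"
proof -
  define k where "k = card S + card T"
  define \<theta> where "\<theta> = sqrt (25 * real k * ln (real N) / real N)"
  have "finite S"
    using S finite_subset by auto
  hence "0 < k"
    using S by (simp add: k_def card_gt_0_iff)
  hence \<theta>: "0 < \<theta>" and \<theta>_eq: "real N * \<theta>\<^sup>2 = 25 * real k * ln (real N)"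
    using N by (simp_all add: \<theta>_def)
  have "prob {U \<in> space M. \<theta> \<le> (\<Sum>i\<in>S. q i * mat_vec U T p i)}
      \<le> exp (- (real N * \<theta>\<^sup>2) / (2 * (5/4)\<^sup>2 * (5/4)\<^sup>2))"
    using p q by (intro prob_bilinear_ge_le S T \<theta>) (auto simp: grid_def)
  also have "\<dots> \<le> exp (- (real k * ln (real N ^ 5)))"
  proof -
    define L where "L = real k * ln (real N)"
    have "0 \<le> L"
      using N by (simp add: L_def)
    moreover have "real N * \<theta>\<^sup>2 / (2 * (5/4)\<^sup>2 * (5/4)\<^sup>2) = 128 / 25 * L"
      using \<theta>_eq by (simp add: L_def power2_eq_square field_simps)
    moreover have "real k * ln (real N ^ 5) = 5 * L"
      using N by (simp add: L_def ln_realpow)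
    ultimately show ?thesis
      by simp
  qed
  also have "\<dots> = (1 / real N ^ 5) ^ k"
    using N by (simp add: exp_neg_mult_ln)
  finally show ?thesis
    by (simp add: \<theta>_def k_def)
qed

lemma prob_grid_violation_le:
  assumes N: "1 < N" and S: "S \<subseteq> {..<N}" "S \<noteq> {}" and T: "T \<subseteq> {..<N}"
  shows "prob (grid_violation M N S T) \<le> ((2 * real N + 1) / real N ^ 5) ^ (card S + card T)"
proof -
  define k where "k = card S + card T"
  define B where "B = (\<lambda>(p, q). {U \<in> space M. sqrt (25 * real k * ln (real N) / real N)
    \<le> (\<Sum>i\<in>S. q i * mat_vec U T p i)})"
  have fin: "finite S" "finite T"
    using S T finite_subset by auto
  have "grid_violation M N S T = (\<Union>pq \<in> grid N T \<times> grid N S. B pq)"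
    by (simp add: grid_violation_def B_def k_def)
  also have "prob \<dots> \<le> (\<Sum>pq \<in> grid N T \<times> grid N S. prob (B pq))"
    using fin by (intro measure_UNION_le) (auto simp: B_def finite_grid events_bilinear_ge)
  also have "\<dots> \<le> real (card (grid N T \<times> grid N S)) * (1 / real N ^ 5) ^ k"
    using prob_grid_form_ge_le[OF N S T] by (intro sum_bounded_above) (auto simp: B_def k_def)
  also have "\<dots> = real (card (grid N T) * card (grid N S)) * (1 / real N ^ 5) ^ k"
    by (simp add: card_cartesian_product)
  also have "\<dots> \<le> real ((2 * N + 1) ^ card T * (2 * N + 1) ^ card S) * (1 / real N ^ 5) ^ k"
    using fin by (intro mult_right_mono of_nat_mono mult_mono card_grid_le) simp_all
  also have "\<dots> = ((2 * real N + 1) / real N ^ 5) ^ (card S + card T)"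
    by (simp add: k_def power_add power_divide field_simps)
  finally show ?thesis .
qed

lemma prob_union_grid_violation_le:
  assumes N: "1 < N"
  shows "prob (\<Union>(S, T) \<in> (Pow {..<N} - {{}}) \<times> (Pow {..<N} - {{}}). grid_violation M N S T)
    \<le> ((1 + (2 * real N + 1) / real N ^ 5) ^ N - 1)\<^sup>2"
proof -
  define PS where "PS = Pow {..<N} - {{}}"
  define r where "r = (2 * real N + 1) / real N ^ 5"
  have PS: "S \<subseteq> {..<N}" "S \<noteq> {}" if "S \<in> PS" for S
    using that by (auto simp: PS_def)
  have PS_finite: "finite S" if "S \<in> PS" for S
    using PS(1)[OF that] by (meson finite_lessThan finite_subset)
  have "prob (\<Union>(S, T) \<in> PS \<times> PS. grid_violation M N S T) \<le> (\<Sum>(S, T) \<in> PS \<times> PS. prob (grid_violation M N S T))"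
    unfolding case_prod_beta
    by (intro measure_UNION_le grid_violation_events) (simp_all add: PS_finite mem_Times_iff PS_def)
  also have "\<dots> \<le> (\<Sum>(S, T) \<in> PS \<times> PS. r ^ card S * r ^ card T)"
  proof (rule sum_mono, clarify)
    fix S T assume S: "S \<in> PS" and T: "T \<in> PS"
    show "prob (grid_violation M N S T) \<le> r ^ card S * r ^ card T"
      unfolding r_def power_add[symmetric]
      by (rule prob_grid_violation_le[OF N PS(1,2)[OF S] PS(1)[OF T]])
  qed
  also have "\<dots> = (\<Sum>S\<in>PS. r ^ card S)\<^sup>2"
    by (simp add: power2_eq_square sum_product sum.cartesian_product case_prod_beta)
  also have "(\<Sum>S\<in>PS. r ^ card S) = (1 + r) ^ N - 1"
    using sum_power_card_Pow[of "{..<N}" r] by (simp add: PS_def sum_diff1)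
  finally show ?thesis
    by (simp add: PS_def r_def)
qed

lemma events_all_sub_opnorm_less:
  "{U \<in> space M. \<forall>S T. S \<subseteq> {..<N} \<and> T \<subseteq> {..<N} \<and> S \<noteq> {} \<and> T \<noteq> {} \<longrightarrow> sub_opnorm U S T < c S T}
    \<in> events"
proof -
  define PS where "PS = Pow {..<N} - {{}}"
  have PS: "S \<in> PS \<longleftrightarrow> S \<subseteq> {..<N} \<and> S \<noteq> {}" for S
    by (auto simp: PS_def)
  have "{U \<in> space M. \<forall>S T. S \<subseteq> {..<N} \<and> T \<subseteq> {..<N} \<and> S \<noteq> {} \<and> T \<noteq> {} \<longrightarrow> sub_opnorm U S T < c S T}
      = {U \<in> space M. \<forall>ST \<in> PS \<times> PS. sub_opnorm U (fst ST) (snd ST) < c (fst ST) (snd ST)}"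
    using PS by force
  also have "\<dots> \<in> events"
  proof (rule sets.sets_Collect_finite_All)
    fix ST assume "ST \<in> PS \<times> PS"
    hence "{U \<in> space (matrix_space N). sub_opnorm U (fst ST) (snd ST) < c (fst ST) (snd ST)}
        \<in> sets (matrix_space N)"
      using finite_subset[of "snd ST" "{..<N}"] by (intro sets_sub_opnorm_less) (auto simp: PS)
    thus "{U \<in> space M. sub_opnorm U (fst ST) (snd ST) < c (fst ST) (snd ST)} \<in> events"
      by (simp add: sets_eq space_eq)
  qed (simp add: PS_def)
  finally show ?thesis .
qed

lemma prob_small_sub_opnorms_ge:
  assumes N: "16 \<le> N"
  shows "1 - ((1 + (2 * real N + 1) / real N ^ 5) ^ N - 1)\<^sup>2
    \<le> prob {U \<in> space M. \<forall>S T. S \<subseteq> {..<N} \<and> T \<subseteq> {..<N} \<and> S \<noteq> {} \<and> T \<noteq> {} \<longrightarrow>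
        sub_opnorm U S T < sqrt (100 * (real (card S) + real (card T)) * ln (real N) / real N)}"
    (is "_ \<le> prob ?Good")
proof -
  define Bad where "Bad = (\<Union>(S, T) \<in> (Pow {..<N} - {{}}) \<times> (Pow {..<N} - {{}}). grid_violation M N S T)"
  have fin: "finite S" if "S \<subseteq> {..<N}" for S
    using that by (meson finite_lessThan finite_subset)
  have Bad_events: "Bad \<in> events"
    unfolding Bad_def case_prod_beta by (intro sets.finite_UN grid_violation_events) (auto intro: fin)
  have "sub_opnorm U S T < sqrt (100 * (real (card S) + real (card T)) * ln (real N) / real N)"
    if U: "U \<in> space M" "U \<notin> Bad" and ST: "S \<subseteq> {..<N}" "T \<subseteq> {..<N}" "S \<noteq> {}" "T \<noteq> {}" for U S T
  proof -
    define \<theta> where "\<theta> = sqrt (25 * real (card S + card T) * ln (real N) / real N)"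
    have "0 < card S"
      using ST fin by (simp add: card_gt_0_iff)
    hence \<theta>: "0 < \<theta>"
      using N by (simp add: \<theta>_def)
    have form: "(\<Sum>i\<in>S. q i * mat_vec U T p i) < \<theta>" if "p \<in> grid N T" "q \<in> grid N S" for p q
    proof -
      have "U \<notin> grid_violation M N S T"
        using U(2) ST unfolding Bad_def by blast
      thus ?thesis
        using U(1) that by (simp add: grid_violation_def \<theta>_def not_le)
    qed
    have "sub_opnorm U S T < 2 * \<theta>"
      by (rule sub_opnorm_less_of_grid[OF N ST(1,2,4) \<theta> form])
    also have "2 * \<theta> = sqrt (2\<^sup>2 * (25 * real (card S + card T) * ln (real N) / real N))"
      unfolding real_sqrt_mult \<theta>_def by simp
    also have "\<dots> = sqrt (100 * (real (card S) + real (card T)) * ln (real N) / real N)"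
      by (simp add: field_simps)
    finally show ?thesis .
  qed
  hence "prob (space M - Bad) \<le> prob ?Good"
    by (intro finite_measure_mono events_all_sub_opnorm_less) auto
  moreover have "prob Bad \<le> ((1 + (2 * real N + 1) / real N ^ 5) ^ N - 1)\<^sup>2"
    unfolding Bad_def using N by (intro prob_union_grid_violation_le) simp
  ultimately show ?thesis
    using prob_compl[OF Bad_events] by simp
qed

end

lemma LIMSEQ_union_bound: "(\<lambda>N. ((1 + (2 * real N + 1) / real N ^ 5) ^ N - 1)\<^sup>2) \<longlonglongrightarrow> 0"
proof -
  define r where "r N = (2 * real N + 1) / real N ^ 5" for N :: nat
  have "(\<lambda>N. 2 * (1 / real N) ^ 3 + (1 / real N) ^ 4) \<longlonglongrightarrow> 2 * 0 ^ 3 + 0 ^ 4"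
    by (intro tendsto_intros lim_1_over_n)
  moreover have "\<forall>\<^sub>F N in sequentially. 2 * (1 / real N) ^ 3 + (1 / real N) ^ 4 = real N * r N"
    using eventually_gt_at_top[of 0]
    by eventually_elim (simp add: r_def field_simps power_eq_if)
  ultimately have "(\<lambda>N. real N * r N) \<longlonglongrightarrow> 0"
    by (simp add: tendsto_cong)
  hence exp_lim: "(\<lambda>N. exp (real N * r N)) \<longlonglongrightarrow> 1"
    using tendsto_exp by fastforce
  have "(\<lambda>N. (1 + r N) ^ N) \<longlonglongrightarrow> 1"
  proof (rule real_tendsto_sandwich[where f = "\<lambda>_. 1" and h = "\<lambda>N. exp (real N * r N)"])
    show "\<forall>\<^sub>F N in sequentially. 1 \<le> (1 + r N) ^ N"
      by (simp add: r_def)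
    have "(1 + r N) ^ N \<le> exp (r N) ^ N" for N
      by (intro power_mono exp_ge_add_one_self) (simp add: r_def)
    thus "\<forall>\<^sub>F N in sequentially. (1 + r N) ^ N \<le> exp (real N * r N)"
      by (simp add: exp_of_nat_mult)
  qed (simp_all add: exp_lim)
  hence "(\<lambda>N. ((1 + r N) ^ N - 1)\<^sup>2) \<longlonglongrightarrow> (1 - 1)\<^sup>2"
    by (intro tendsto_intros)
  thus ?thesis
    by (simp add: r_def)
qed

theorem mainTheorem8:
  fixes M :: "nat \<Rightarrow> (nat \<times> nat \<Rightarrow> real) measure"
  assumes "\<And>N. haar_orthogonal N (M N)"
  shows "(\<lambda>N. measure (M N) {U \<in> space (M N). \<forall>S T. S \<subseteq> {..<N} \<and> T \<subseteq> {..<N} \<and> S \<noteq> {} \<and> T \<noteq> {} \<longrightarrow>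
            sub_opnorm U S T < sqrt (100 * (real (card S) + real (card T)) * ln (real N) / real N)})
         \<longlonglongrightarrow> 1"
proof -
  interpret haar_orthogonal_measure N "M N" for N
    using assms by unfold_locales
  show ?thesis
  proof (rule real_tendsto_sandwich[where h = "\<lambda>_. 1"])
    show "\<forall>\<^sub>F N in sequentially. 1 - ((1 + (2 * real N + 1) / real N ^ 5) ^ N - 1)\<^sup>2
        \<le> measure (M N) {U \<in> space (M N). \<forall>S T. S \<subseteq> {..<N} \<and> T \<subseteq> {..<N} \<and> S \<noteq> {} \<and> T \<noteq> {} \<longrightarrow>
            sub_opnorm U S T < sqrt (100 * (real (card S) + real (card T)) * ln (real N) / real N)}"
      using eventually_ge_at_top[of 16] by eventually_elim (rule prob_small_sub_opnorms_ge)
    show "(\<lambda>N. 1 - ((1 + (2 * real N + 1) / real N ^ 5) ^ N - 1)\<^sup>2) \<longlonglongrightarrow> 1"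
      using tendsto_diff[OF tendsto_const LIMSEQ_union_bound, of 1] by simp
  qed simp_all
qed

end
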